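(* Let $Q$ be a finite quiver with $kQ$ of finite GK-dimension, and let $v,w$ be cyclic vertices. Then $\mathrm{Hom}_{\mathrm{QGr}\,kQ}(\pi^*\mathcal O_v,\pi^*\mathcal O_w)\neq0$ if and only if $v=w$. In particular $\pi^*\mathcal O_v\not\cong\pi^*\mathcal O_w$ for $v\neq w$.
   Context: $k$ is a field; $kQ$ is the path algebra graded by path length; $\mathrm{QGr}\,kQ=\mathrm{Gr}\,kQ/\mathrm{Tors}\,kQ$ with quotient functor $\pi^*$, where $\mathrm{Tors}$ consists of graded modules in which every element is annihilated by $(kQ)_{\ge n}$ for some $n$. With finite GK-dimension each cyclic vertex $v$ lies on a unique simple cycle $p=(v=v_0,a_1,\dots,a_n,v_n=v)$, and $\mathcal O_v=e_vkQ/\bigoplus p^m a_1\cdots a_i b\,kQ$ (sum over $m\ge0$, $0\le i<n$, arrows $b\neq a_{i+1}$ with source $v_i$), a graded module with basis the images of $p^m a_1\cdots a_i$. *)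

theory Defs
  imports Complex_Main "HOL-Library.Extended_Real"
begin

(* A finite quiver is given by a vertex set V, an arrow set A and source/target maps s, t.
   A path is (start vertex, list of arrows), read left to right; trivial path e_v = (v, []). *)

type_synonym ('v,'a) path = "'v \<times> 'a list"

definition quiver :: "'v set \<Rightarrow> 'a set \<Rightarrow> ('a \<Rightarrow> 'v) \<Rightarrow> ('a \<Rightarrow> 'v) \<Rightarrow> bool" where
  "quiver V A s t \<longleftrightarrow> (\<forall>a\<in>A. s a \<in> V \<and> t a \<in> V)"

definition is_path :: "'v set \<Rightarrow> 'a set \<Rightarrow> ('a \<Rightarrow> 'v) \<Rightarrow> ('a \<Rightarrow> 'v) \<Rightarrow> ('v,'a) path \<Rightarrow> bool" where
  "is_path V A s t p \<longleftrightarrow> fst p \<in> V \<and> set (snd p) \<subseteq> A \<and>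
     (snd p \<noteq> [] \<longrightarrow> s (hd (snd p)) = fst p) \<and>
     (\<forall>i. Suc i < length (snd p) \<longrightarrow> t (snd p ! i) = s (snd p ! Suc i))"

definition pend :: "('a \<Rightarrow> 'v) \<Rightarrow> ('v,'a) path \<Rightarrow> 'v" where
  "pend t p = (if snd p = [] then fst p else t (last (snd p)))"

definition plen :: "('v,'a) path \<Rightarrow> nat" where
  "plen p = length (snd p)"

definition pcat :: "('a \<Rightarrow> 'v) \<Rightarrow> ('v,'a) path \<Rightarrow> ('v,'a) path \<Rightarrow> ('v,'a) path option" where
  "pcat t p q = (if pend t p = fst q then Some (fst p, snd p @ snd q) else None)"

definition kQ :: "'v set \<Rightarrow> 'a set \<Rightarrow> ('a \<Rightarrow> 'v) \<Rightarrow> ('a \<Rightarrow> 'v) \<Rightarrow> (('v,'a) path \<Rightarrow> 'k::field) set" where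
  "kQ V A s t = {x. finite {p. x p \<noteq> 0} \<and> (\<forall>p. x p \<noteq> 0 \<longrightarrow> is_path V A s t p)}"

definition pzero :: "('v,'a) path \<Rightarrow> 'k::field" where
  "pzero = (\<lambda>p. 0)"

definition padd :: "(('v,'a) path \<Rightarrow> 'k::field) \<Rightarrow> (('v,'a) path \<Rightarrow> 'k) \<Rightarrow> ('v,'a) path \<Rightarrow> 'k" where
  "padd x y = (\<lambda>p. x p + y p)"

definition pdiff :: "(('v,'a) path \<Rightarrow> 'k::field) \<Rightarrow> (('v,'a) path \<Rightarrow> 'k) \<Rightarrow> ('v,'a) path \<Rightarrow> 'k" where
  "pdiff x y = (\<lambda>p. x p - y p)"

definition smult :: "'k::field \<Rightarrow> (('v,'a) path \<Rightarrow> 'k) \<Rightarrow> ('v,'a) path \<Rightarrow> 'k" where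
  "smult c x = (\<lambda>p. c * x p)"

definition pmult :: "('a \<Rightarrow> 'v) \<Rightarrow> (('v,'a) path \<Rightarrow> 'k::field) \<Rightarrow> (('v,'a) path \<Rightarrow> 'k) \<Rightarrow> ('v,'a) path \<Rightarrow> 'k" where
  "pmult t x y = (\<lambda>r. \<Sum>pq\<in>{pq. x (fst pq) \<noteq> 0 \<and> y (snd pq) \<noteq> 0 \<and> pcat t (fst pq) (snd pq) = Some r}.
                      x (fst pq) * y (snd pq))"

definition pbasis :: "('v,'a) path \<Rightarrow> ('v,'a) path \<Rightarrow> 'k::field" where
  "pbasis p = (\<lambda>q. if q = p then 1 else 0)"

definition homog :: "nat \<Rightarrow> (('v,'a) path \<Rightarrow> 'k::field) \<Rightarrow> bool" where
  "homog d x \<longleftrightarrow> (\<forall>p. x p \<noteq> 0 \<longrightarrow> plen p = d)"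

definition hcomp :: "nat \<Rightarrow> (('v,'a) path \<Rightarrow> 'k::field) \<Rightarrow> ('v,'a) path \<Rightarrow> 'k" where
  "hcomp d x = (\<lambda>p. if plen p = d then x p else 0)"

definition rsub :: "'v set \<Rightarrow> 'a set \<Rightarrow> ('a \<Rightarrow> 'v) \<Rightarrow> ('a \<Rightarrow> 'v) \<Rightarrow> (('v,'a) path \<Rightarrow> 'k::field) set \<Rightarrow> bool" where
  "rsub V A s t S \<longleftrightarrow> S \<subseteq> kQ V A s t \<and> pzero \<in> S \<and> (\<forall>x\<in>S. \<forall>y\<in>S. padd x y \<in> S) \<and>
     (\<forall>c. \<forall>x\<in>S. smult c x \<in> S) \<and> (\<forall>x\<in>S. \<forall>y\<in>kQ V A s t. pmult t x y \<in> S)"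

definition gsub :: "'v set \<Rightarrow> 'a set \<Rightarrow> ('a \<Rightarrow> 'v) \<Rightarrow> ('a \<Rightarrow> 'v) \<Rightarrow> (('v,'a) path \<Rightarrow> 'k::field) set \<Rightarrow> bool" where
  "gsub V A s t S \<longleftrightarrow> rsub V A s t S \<and> (\<forall>d. \<forall>x\<in>S. hcomp d x \<in> S)"

definition gen_rsub :: "'v set \<Rightarrow> 'a set \<Rightarrow> ('a \<Rightarrow> 'v) \<Rightarrow> ('a \<Rightarrow> 'v) \<Rightarrow> (('v,'a) path \<Rightarrow> 'k::field) set \<Rightarrow> (('v,'a) path \<Rightarrow> 'k) set" where
  "gen_rsub V A s t G = \<Inter>{S. rsub V A s t S \<and> G \<subseteq> S}"

(* the quotient M/N (N \<subseteq> M submodules) lies in Tors kQ: every element is killed by (kQ)_{>= n} *)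
definition torsion_quot :: "'v set \<Rightarrow> 'a set \<Rightarrow> ('a \<Rightarrow> 'v) \<Rightarrow> ('a \<Rightarrow> 'v) \<Rightarrow> (('v,'a) path \<Rightarrow> 'k::field) set \<Rightarrow> (('v,'a) path \<Rightarrow> 'k) set \<Rightarrow> bool" where
  "torsion_quot V A s t M N \<longleftrightarrow> (\<forall>x\<in>M. \<exists>n. \<forall>y\<in>kQ V A s t. (\<forall>p. y p \<noteq> 0 \<longrightarrow> n \<le> plen p) \<longrightarrow> pmult t x y \<in> N)"

(* A graded module is represented as a subquotient (M, N) of kQ, i.e. M/N for graded
   right submodules N \<subseteq> M of kQ.  A degree-0 graded homomorphism M/N \<rightarrow> M'/N'
   is represented by a function f on representatives. *)
definition gr_hom :: "'v set \<Rightarrow> 'a set \<Rightarrow> ('a \<Rightarrow> 'v) \<Rightarrow> ('a \<Rightarrow> 'v) \<Rightarrow>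
    (('v,'a) path \<Rightarrow> 'k::field) set \<times> (('v,'a) path \<Rightarrow> 'k) set \<Rightarrow>
    (('v,'a) path \<Rightarrow> 'k) set \<times> (('v,'a) path \<Rightarrow> 'k) set \<Rightarrow>
    ((('v,'a) path \<Rightarrow> 'k) \<Rightarrow> (('v,'a) path \<Rightarrow> 'k)) \<Rightarrow> bool" where
  "gr_hom V A s t M N f \<longleftrightarrow>
     (\<forall>x\<in>fst M. f x \<in> fst N) \<and> (\<forall>x\<in>snd M. f x \<in> snd N) \<and>
     (\<forall>x\<in>fst M. \<forall>y\<in>fst M. pdiff (f (padd x y)) (padd (f x) (f y)) \<in> snd N) \<and>
     (\<forall>c. \<forall>x\<in>fst M. pdiff (f (smult c x)) (smult c (f x)) \<in> snd N) \<and>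
     (\<forall>x\<in>fst M. \<forall>y\<in>kQ V A s t. pdiff (f (pmult t x y)) (pmult t (f x) y) \<in> snd N) \<and>
     (\<forall>d. \<forall>x\<in>fst M. homog d x \<longrightarrow> (\<exists>z\<in>fst N. homog d z \<and> pdiff (f x) z \<in> snd N))"

(* Hom_{QGr}(pi* M, pi* N) = colim Hom_{Gr}(M', N/N') over M' \<subseteq> M with M/M' torsion and
   N' \<subseteq> N torsion (Gabriel's description of Hom in a quotient category).
   It is nonzero iff some representative f stays nonzero after every further restriction. *)
definition qgr_hom_nonzero :: "'v set \<Rightarrow> 'a set \<Rightarrow> ('a \<Rightarrow> 'v) \<Rightarrow> ('a \<Rightarrow> 'v) \<Rightarrow>
    (('v,'a) path \<Rightarrow> 'k::field) set \<times> (('v,'a) path \<Rightarrow> 'k) set \<Rightarrow>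
    (('v,'a) path \<Rightarrow> 'k) set \<times> (('v,'a) path \<Rightarrow> 'k) set \<Rightarrow> bool" where
  "qgr_hom_nonzero V A s t M N \<longleftrightarrow>
    (\<exists>M' N' f.
       gsub V A s t M' \<and> snd M \<subseteq> M' \<and> M' \<subseteq> fst M \<and> torsion_quot V A s t (fst M) M' \<and>
       gsub V A s t N' \<and> snd N \<subseteq> N' \<and> N' \<subseteq> fst N \<and> torsion_quot V A s t N' (snd N) \<and>
       gr_hom V A s t (M', snd M) (fst N, N') f \<and>
       (\<forall>M'' N''.
          gsub V A s t M'' \<and> snd M \<subseteq> M'' \<and> M'' \<subseteq> M' \<and> torsion_quot V A s t (fst M) M'' \<and>
          gsub V A s t N'' \<and> N' \<subseteq> N'' \<and> N'' \<subseteq> fst N \<and> torsion_quot V A s t N'' (snd N)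
          \<longrightarrow> (\<exists>x\<in>M''. f x \<notin> N'')))"

(* GK-dimension of kQ w.r.t. the generating subspace kQ_0 + kQ_1 (V^n spanned by paths of length \<le> n) *)
definition gk_dim :: "'v set \<Rightarrow> 'a set \<Rightarrow> ('a \<Rightarrow> 'v) \<Rightarrow> ('a \<Rightarrow> 'v) \<Rightarrow> ereal" where
  "gk_dim V A s t = limsup (\<lambda>n::nat. ereal (ln (real (card {p. is_path V A s t p \<and> plen p \<le> n})) / ln (real n)))"

definition cyclic_vertex :: "'v set \<Rightarrow> 'a set \<Rightarrow> ('a \<Rightarrow> 'v) \<Rightarrow> ('a \<Rightarrow> 'v) \<Rightarrow> 'v \<Rightarrow> bool" where
  "cyclic_vertex V A s t v \<longleftrightarrow> (\<exists>as. is_path V A s t (v, as) \<and> as \<noteq> [] \<and> pend t (v, as) = v)"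

definition simple_cycle :: "'v set \<Rightarrow> 'a set \<Rightarrow> ('a \<Rightarrow> 'v) \<Rightarrow> ('a \<Rightarrow> 'v) \<Rightarrow> 'v \<Rightarrow> 'a list \<Rightarrow> bool" where
  "simple_cycle V A s t v as \<longleftrightarrow> is_path V A s t (v, as) \<and> as \<noteq> [] \<and> pend t (v, as) = v \<and> distinct (map s as)"

definition the_cycle :: "'v set \<Rightarrow> 'a set \<Rightarrow> ('a \<Rightarrow> 'v) \<Rightarrow> ('a \<Rightarrow> 'v) \<Rightarrow> 'v \<Rightarrow> 'a list" where
  "the_cycle V A s t v = (THE as. simple_cycle V A s t v as)"

definition O_gens :: "'v set \<Rightarrow> 'a set \<Rightarrow> ('a \<Rightarrow> 'v) \<Rightarrow> ('a \<Rightarrow> 'v) \<Rightarrow> 'v \<Rightarrow> (('v,'a) path \<Rightarrow> 'k::field) set" where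
  "O_gens V A s t v = (let p = the_cycle V A s t v in
     {pbasis (v, concat (replicate m p) @ take i p @ [b]) | m i b.
        i < length p \<and> b \<in> A \<and> s b = s (p ! i) \<and> b \<noteq> p ! i})"

definition evkQ :: "'v set \<Rightarrow> 'a set \<Rightarrow> ('a \<Rightarrow> 'v) \<Rightarrow> ('a \<Rightarrow> 'v) \<Rightarrow> 'v \<Rightarrow> (('v,'a) path \<Rightarrow> 'k::field) set" where
  "evkQ V A s t v = {pmult t (pbasis (v, [])) y | y. y \<in> kQ V A s t}"

(* O_v = e_v kQ / (sum of p^m a_1 ... a_i b kQ), as a subquotient of kQ *)
definition O_mod :: "'v set \<Rightarrow> 'a set \<Rightarrow> ('a \<Rightarrow> 'v) \<Rightarrow> ('a \<Rightarrow> 'v) \<Rightarrow> 'v \<Rightarrow>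
    (('v,'a) path \<Rightarrow> 'k::field) set \<times> (('v,'a) path \<Rightarrow> 'k) set" where
  "O_mod V A s t v = (evkQ V A s t v, gen_rsub V A s t (O_gens V A s t v))"

end

theory Submission
  imports Defs "HOL-Real_Asymp.Real_Asymp"
begin

text \<open>
  If a cyclic vertex v lay on two different simple cycles, the closed walks at v built from
  them would form a free monoid and kQ would grow exponentially; so finite GK-dimension makes
  the cycle p through v unique. Then O_v is e_v kQ modulo the right ideal spanned by the paths
  p^m a_1...a_i b that leave the cycle, and every other path from v is a prefix of a power of p.

  For v = w the identity survives every restriction: the powers p^n lie in each submodule of
  e_v kQ with torsion cokernel, but never in a torsion extension of the exit ideal.
  For v \<noteq> w take K with K |p_v| a multiple of |p_w|, large enough that u = p_v^K lies in the
  domain of a representative f. Then f u = f (u e_v) = (f u) e_v, and f u is homogeneous of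
  degree K |p_v|, where the only path of O_w is p_w^(K |p_v| / |p_w|), which ends at w, not v.
  So f kills u and the exit paths at v, which generate a submodule with torsion cokernel in
  e_v kQ; hence f represents zero.
\<close>

section \<open>Walks and powers of a cycle\<close>

fun walk :: "('a \<Rightarrow> 'v) \<Rightarrow> ('a \<Rightarrow> 'v) \<Rightarrow> 'v \<Rightarrow> 'a list \<Rightarrow> bool" where
  "walk s t a [] = True"
| "walk s t a (b # l) = (s b = a \<and> walk s t (t b) l)"

lemma walk_iff_chain:
  "walk s t a l \<longleftrightarrow>
     (l \<noteq> [] \<longrightarrow> s (hd l) = a) \<and> (\<forall>i. Suc i < length l \<longrightarrow> t (l ! i) = s (l ! Suc i))"
proof (induction l arbitrary: a)
  case Nil then show ?case by simp
next
  case (Cons b l)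
  have "(\<forall>i. Suc i < length (b # l) \<longrightarrow> t ((b # l) ! i) = s ((b # l) ! Suc i))
        \<longleftrightarrow> (l \<noteq> [] \<longrightarrow> s (hd l) = t b) \<and> (\<forall>i. Suc i < length l \<longrightarrow> t (l ! i) = s (l ! Suc i))"
    (is "?L \<longleftrightarrow> ?R")
  proof
    assume L: ?L
    show ?R
    proof
      show "l \<noteq> [] \<longrightarrow> s (hd l) = t b"
        using L[rule_format, of 0] by (cases l) auto
      show "\<forall>i. Suc i < length l \<longrightarrow> t (l ! i) = s (l ! Suc i)"
        using L by (metis Suc_less_eq length_Cons nth_Cons_Suc)
    qed
  next
    assume ?R
    show ?L
    proof (intro allI impI)
      fix i assume "Suc i < length (b # l)"
      then show "t ((b # l) ! i) = s ((b # l) ! Suc i)"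
        using \<open>?R\<close> by (cases i) (auto simp: hd_conv_nth)
    qed
  qed
  then show ?case using Cons.IH[of "t b"] by auto
qed

lemma is_path_iff_walk:
  "is_path V A s t p \<longleftrightarrow> fst p \<in> V \<and> set (snd p) \<subseteq> A \<and> walk s t (fst p) (snd p)"
  unfolding is_path_def walk_iff_chain by auto

lemma pend_Nil [simp]: "pend t (a, []) = a"
  by (simp add: pend_def)

lemma pend_Cons [simp]: "pend t (a, b # l) = pend t (t b, l)"
  by (simp add: pend_def)

lemma pend_append: "pend t (a, l1 @ l2) = pend t (pend t (a, l1), l2)"
  by (simp add: pend_def)

lemma walk_append: "walk s t a (l1 @ l2) \<longleftrightarrow> walk s t a l1 \<and> walk s t (pend t (a, l1)) l2"
  by (induction l1 arbitrary: a) auto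

lemma pend_take:
  "walk s t a l \<Longrightarrow> i < length l \<Longrightarrow> pend t (a, take i l) = s (l ! i)"
proof (induction l arbitrary: a i)
  case Nil then show ?case by simp
next
  case (Cons b l) then show ?case by (cases i) auto
qed

lemma pend_in_V:
  assumes "quiver V A s t" "is_path V A s t p"
  shows "pend t p \<in> V"
proof (cases "snd p = []")
  case True then show ?thesis using assms by (simp add: pend_def is_path_def)
next
  case False
  then have "last (snd p) \<in> A" using assms(2) last_in_set[of "snd p"] by (auto simp: is_path_def)
  then show ?thesis using assms(1) False by (simp add: pend_def quiver_def)
qed

lemma is_path_append:
  assumes "is_path V A s t p" "is_path V A s t q" "pend t p = fst q"
  shows "is_path V A s t (fst p, snd p @ snd q)"
  using assms by (auto simp: is_path_iff_walk walk_append)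

lemma is_path_suffix:
  assumes "quiver V A s t" "is_path V A s t (a, l1 @ l2)"
  shows "is_path V A s t (pend t (a, l1), l2)"
proof -
  have "is_path V A s t (a, l1)"
    using assms(2) by (simp add: is_path_iff_walk walk_append)
  then show ?thesis
    using assms(2) pend_in_V[OF assms(1)] by (simp add: is_path_iff_walk walk_append)
qed

definition list_pow :: "'a list \<Rightarrow> nat \<Rightarrow> 'a list" where
  "list_pow p k = concat (replicate k p)"

lemma list_pow_add: "list_pow p (m + n) = list_pow p m @ list_pow p n"
  by (simp add: list_pow_def replicate_add)

lemma length_list_pow [simp]: "length (list_pow p k) = k * length p"
  by (induction k) (auto simp: list_pow_def)

lemma set_list_pow: "set (list_pow p k) \<subseteq> set p"
  by (induction k) (auto simp: list_pow_def)

lemma walk_list_pow: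
  assumes "walk s t a p" "pend t (a, p) = a"
  shows "walk s t a (list_pow p k)" "pend t (a, list_pow p k) = a"
proof -
  have "walk s t a (list_pow p k) \<and> pend t (a, list_pow p k) = a"
  proof (induction k)
    case 0 then show ?case by (simp add: list_pow_def)
  next
    case (Suc k)
    have "list_pow p (Suc k) = p @ list_pow p k" by (simp add: list_pow_def)
    then show ?case using Suc assms by (simp add: walk_append pend_append)
  qed
  then show "walk s t a (list_pow p k)" "pend t (a, list_pow p k) = a" by auto
qed

lemma is_path_list_pow:
  assumes "v \<in> V" "walk s t v p" "pend t (v, p) = v" "set p \<subseteq> A"
  shows "is_path V A s t (v, list_pow p k)"
  using assms walk_list_pow[of s t v p k] set_list_pow[of p k] by (auto simp: is_path_iff_walk)

lemma nth_list_pow: "j < k * length p \<Longrightarrow> list_pow p k ! j = p ! (j mod length p)"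
proof (induction k arbitrary: j)
  case 0 then show ?case by simp
next
  case (Suc k)
  have e: "list_pow p (Suc k) = p @ list_pow p k" by (simp add: list_pow_def)
  show ?case
  proof (cases "j < length p")
    case True then show ?thesis by (simp add: e nth_append)
  next
    case False
    then have "j - length p < k * length p" using Suc.prems by auto
    then show ?thesis using False Suc.IH[of "j - length p"]
      by (simp add: e nth_append mod_if)
  qed
qed

lemma nth_list_pow_append_take:
  assumes "i < length p" "j < m * length p + i"
  shows "(list_pow p m @ take i p @ l) ! j = p ! (j mod length p)"
proof (cases "j < m * length p")
  case True then show ?thesis by (simp add: nth_append nth_list_pow)
next
  case False
  then have d: "j - m * length p < i" using assms by auto
  have "j mod length p = (j - m * length p + m * length p) mod length p"
    using False by simp
  also have "\<dots> = j - m * length p" using d assms by simp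
  finally show ?thesis using False d assms by (simp add: nth_append)
qed

lemma concat_map_inj_prefix_free:
  assumes "\<not> (\<exists>r. f True = f False @ r)" "\<not> (\<exists>r. f False = f True @ r)"
  shows "length w1 = length w2 \<Longrightarrow> concat (map f w1) = concat (map f w2) \<Longrightarrow> w1 = w2"
proof (induction w1 arbitrary: w2)
  case Nil then show ?case by simp
next
  case (Cons b1 w1)
  then obtain b2 w2' where w2: "w2 = b2 # w2'" by (cases w2) auto
  have eq: "f b1 @ concat (map f w1) = f b2 @ concat (map f w2')" using Cons.prems w2 by simp
  have "b1 = b2"
  proof (rule ccontr)
    assume "b1 \<noteq> b2"
    then show False using eq assms unfolding append_eq_append_conv2
      by (cases b1; cases b2) (auto, (metis)+)
  qed
  then show ?case using eq Cons w2 by simp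
qed

section \<open>The path algebra\<close>

definition path_split :: "('a \<Rightarrow> 'v) \<Rightarrow> ('v,'a) path \<Rightarrow> nat \<Rightarrow> ('v,'a) path \<times> ('v,'a) path" where
  "path_split t r k = ((fst r, take k (snd r)), (pend t (fst r, take k (snd r)), drop k (snd r)))"

lemma pcat_eq_Some_iff:
  "pcat t p q = Some r \<longleftrightarrow> (\<exists>k \<le> length (snd r). (p, q) = path_split t r k)"
proof
  assume "pcat t p q = Some r"
  then have h: "pend t p = fst q" "r = (fst p, snd p @ snd q)"
    by (auto simp: pcat_def split: if_splits)
  show "\<exists>k \<le> length (snd r). (p, q) = path_split t r k"
    by (rule exI[of _ "length (snd p)"]) (use h in \<open>auto simp: path_split_def prod_eq_iff\<close>)
next
  assume "\<exists>k \<le> length (snd r). (p, q) = path_split t r k"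
  then show "pcat t p q = Some r"
    by (auto simp: path_split_def pcat_def)
qed

lemma pmult_eq_sum_splits:
  "pmult t x y r = (\<Sum>k\<le>length (snd r). x (fst (path_split t r k)) * y (snd (path_split t r k)))"
proof -
  let ?S = "{pq. x (fst pq) \<noteq> 0 \<and> y (snd pq) \<noteq> 0 \<and> pcat t (fst pq) (snd pq) = Some r}"
  let ?P = "path_split t r ` {..length (snd r)}"
  have "?S \<subseteq> ?P"
    using pcat_eq_Some_iff[of t] by (fastforce simp: image_iff)
  then have "pmult t x y r = (\<Sum>pq\<in>?P. x (fst pq) * y (snd pq))"
    unfolding pmult_def by (intro sum.mono_neutral_left) (use pcat_eq_Some_iff[of t] in auto)
  also have "\<dots> = (\<Sum>k\<le>length (snd r). x (fst (path_split t r k)) * y (snd (path_split t r k)))"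
  proof (rule sum.reindex_cong[where l = "path_split t r"])
    show "inj_on (path_split t r) {..length (snd r)}"
      by (auto simp: inj_on_def path_split_def) (metis length_take min.absorb2)
  qed auto
  finally show ?thesis .
qed

lemma pmult_nonzeroE:
  assumes "pmult t x y r \<noteq> 0"
  obtains k where "k \<le> length (snd r)" "x (fst r, take k (snd r)) \<noteq> 0"
    "y (pend t (fst r, take k (snd r)), drop k (snd r)) \<noteq> 0"
proof -
  from assms obtain k where "k \<in> {..length (snd r)}"
    "x (fst (path_split t r k)) * y (snd (path_split t r k)) \<noteq> 0"
    unfolding pmult_eq_sum_splits by (meson sum.not_neutral_contains_not_neutral)
  then show ?thesis using that by (auto simp: path_split_def)
qed

lemma pmult_pdiff_left: "pmult t (pdiff a b) c = pdiff (pmult t a c) (pmult t b c)"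
  by (rule ext) (simp add: pmult_eq_sum_splits pdiff_def sum_subtractf algebra_simps)

lemma pmult_vertex_left:
  "pmult t (pbasis (v, [])) y = (\<lambda>r. if fst r = v then y r else 0)"
proof (rule ext)
  fix r
  have "pmult t (pbasis (v, [])) y r =
        (\<Sum>k\<le>length (snd r). (if k = 0 \<and> fst r = v then y r else 0))"
    unfolding pmult_eq_sum_splits
    by (rule sum.cong) (auto simp: path_split_def pbasis_def, metis prod.collapse)
  then show "pmult t (pbasis (v, [])) y r = (if fst r = v then y r else 0)"
    by (simp add: sum.delta')
qed

lemma pmult_vertex_right:
  "pmult t x (pbasis (v, [])) = (\<lambda>r. if pend t r = v then x r else 0)"
proof (rule ext)
  fix r
  have "pmult t x (pbasis (v, [])) r =
        (\<Sum>k\<le>length (snd r). (if k = length (snd r) \<and> pend t r = v then x r else 0))"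
    unfolding pmult_eq_sum_splits
    by (rule sum.cong) (auto simp: path_split_def pbasis_def)
  then show "pmult t x (pbasis (v, [])) r = (if pend t r = v then x r else 0)"
    by (simp add: sum.delta')
qed

lemma pmult_pbasis:
  assumes "pend t g = fst h"
  shows "pmult t (pbasis g) (pbasis h) = pbasis (fst g, snd g @ snd h)"
proof (rule ext)
  fix r
  have "pmult t (pbasis g) (pbasis h) r =
        (\<Sum>k\<le>length (snd r). (if k = length (snd g) \<and> r = (fst g, snd g @ snd h) then 1 else 0))"
    unfolding pmult_eq_sum_splits
  proof (rule sum.cong)
    fix k assume "k \<in> {..length (snd r)}"
    then show "pbasis g (fst (path_split t r k)) * pbasis h (snd (path_split t r k)) =
          (if k = length (snd g) \<and> r = (fst g, snd g @ snd h) then 1 else 0)"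
      using assms by (cases g; cases h; cases r) (auto simp: path_split_def pbasis_def)
  qed simp
  then show "pmult t (pbasis g) (pbasis h) r = pbasis (fst g, snd g @ snd h) r"
    by (auto simp: sum.delta' pbasis_def)
qed

lemma kQ_finite_support: "x \<in> kQ V A s t \<Longrightarrow> finite {p. x p \<noteq> 0}"
  by (simp add: kQ_def)

lemma kQ_is_path: "x \<in> kQ V A s t \<Longrightarrow> x p \<noteq> 0 \<Longrightarrow> is_path V A s t p"
  unfolding kQ_def by blast

lemma kQ_I: "finite {p. x p \<noteq> 0} \<Longrightarrow> (\<And>p. x p \<noteq> 0 \<Longrightarrow> is_path V A s t p) \<Longrightarrow> x \<in> kQ V A s t"
  by (simp add: kQ_def)

lemma kQ_support_mono:
  assumes "y \<in> kQ V A s t" "\<And>p. x p \<noteq> 0 \<Longrightarrow> y p \<noteq> 0"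
  shows "x \<in> kQ V A s t"
proof (rule kQ_I)
  show "finite {p. x p \<noteq> 0}"
    using kQ_finite_support[OF assms(1)] by (rule rev_finite_subset) (use assms(2) in blast)
qed (use assms kQ_is_path in blast)

lemma kQ_pzero: "pzero \<in> kQ V A s t"
  by (simp add: kQ_def pzero_def)

lemma kQ_padd:
  assumes x: "x \<in> kQ V A s t" and y: "y \<in> kQ V A s t"
  shows "padd x y \<in> kQ V A s t"
proof (rule kQ_I)
  have "{p. padd x y p \<noteq> 0} \<subseteq> {p. x p \<noteq> 0} \<union> {p. y p \<noteq> 0}" by (auto simp: padd_def)
  then show "finite {p. padd x y p \<noteq> 0}"
    using kQ_finite_support[OF x] kQ_finite_support[OF y] by (meson finite_Un finite_subset)
  fix p assume "padd x y p \<noteq> 0"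
  then have "x p \<noteq> 0 \<or> y p \<noteq> 0" by (auto simp: padd_def)
  then show "is_path V A s t p" using x y kQ_is_path by metis
qed

lemma kQ_smult: "x \<in> kQ V A s t \<Longrightarrow> smult c x \<in> kQ V A s t"
  by (erule kQ_support_mono) (simp add: smult_def)

lemma kQ_hcomp: "x \<in> kQ V A s t \<Longrightarrow> hcomp d x \<in> kQ V A s t"
  by (erule kQ_support_mono) (simp add: hcomp_def split: if_splits)

lemma kQ_pbasis: "is_path V A s t g \<Longrightarrow> pbasis g \<in> kQ V A s t"
  by (rule kQ_I) (auto simp: pbasis_def split: if_splits)

lemma kQ_pmult:
  assumes q: "quiver V A s t" and x: "x \<in> kQ V A s t" and y: "y \<in> kQ V A s t"
  shows "pmult t x y \<in> kQ V A s t"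
proof (rule kQ_I)
  let ?F = "(\<lambda>(p, q). (fst p, snd p @ snd q)) ` ({p. x p \<noteq> 0} \<times> {p. y p \<noteq> 0})"
  have "{r. pmult t x y r \<noteq> 0} \<subseteq> ?F"
  proof
    fix r assume "r \<in> {r. pmult t x y r \<noteq> 0}"
    then obtain k where "x (fst r, take k (snd r)) \<noteq> 0"
      "y (pend t (fst r, take k (snd r)), drop k (snd r)) \<noteq> 0"
      by (auto elim: pmult_nonzeroE)
    then show "r \<in> ?F"
      by (intro image_eqI[of _ _ "((fst r, take k (snd r)), (pend t (fst r, take k (snd r)), drop k (snd r)))"]) auto
  qed
  then show "finite {r. pmult t x y r \<noteq> 0}"
    using kQ_finite_support[OF x] kQ_finite_support[OF y] by (meson finite_SigmaI finite_imageI finite_subset)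
  fix r assume "pmult t x y r \<noteq> 0"
  then obtain k where h1: "x (fst r, take k (snd r)) \<noteq> 0"
      and h2: "y (pend t (fst r, take k (snd r)), drop k (snd r)) \<noteq> 0"
    by (auto elim: pmult_nonzeroE)
  have "is_path V A s t (fst r, take k (snd r) @ drop k (snd r))"
    using is_path_append[OF kQ_is_path[OF x h1] kQ_is_path[OF y h2]] by simp
  then show "is_path V A s t r" by simp
qed

lemma rsub_pdiff_closed:
  assumes "rsub V A s t S" "pdiff a b \<in> S" "b \<in> S"
  shows "a \<in> S"
proof -
  have "padd (pdiff a b) b = a" by (rule ext) (simp add: padd_def pdiff_def)
  then show ?thesis using assms unfolding rsub_def by metis
qed

lemma gen_rsub_least: "rsub V A s t S \<Longrightarrow> G \<subseteq> S \<Longrightarrow> gen_rsub V A s t G \<subseteq> S"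
  unfolding gen_rsub_def by blast

lemma rsub_restrict_support:
  assumes S: "rsub V A s t S" and "finite F" and "\<forall>q\<in>F. pbasis q \<in> S"
  shows "(\<lambda>p. if p \<in> F then x p else 0) \<in> S"
  using assms(2,3)
proof (induction F rule: finite_induct)
  case empty
  then show ?case using S by (simp add: rsub_def pzero_def)
next
  case (insert q F)
  have "(\<lambda>p. if p \<in> insert q F then x p else 0) =
           padd (\<lambda>p. if p \<in> F then x p else 0) (smult (x q) (pbasis q))"
    using insert(2) by (auto simp: padd_def smult_def pbasis_def)
  then show ?case using S insert by (auto simp: rsub_def)
qed

section \<open>Right ideals spanned by paths\<close>

definition path_ideal :: "'v set \<Rightarrow> 'a set \<Rightarrow> ('a \<Rightarrow> 'v) \<Rightarrow> ('a \<Rightarrow> 'v) \<Rightarrow> ('v,'a) path set \<Rightarrow>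
    (('v,'a) path \<Rightarrow> 'k::field) set" where
  "path_ideal V A s t P = {x \<in> kQ V A s t. \<forall>q. x q \<noteq> 0 \<longrightarrow> (\<exists>g\<in>P. \<exists>r. q = (fst g, snd g @ r))}"

lemma path_ideal_iff:
  "x \<in> path_ideal V A s t P \<longleftrightarrow>
     x \<in> kQ V A s t \<and> (\<forall>q. x q \<noteq> 0 \<longrightarrow> (\<exists>g\<in>P. \<exists>r. q = (fst g, snd g @ r)))"
  by (simp only: path_ideal_def mem_Collect_eq)

lemma path_ideal_vertex_iff:
  "x \<in> path_ideal V A s t {(v, [])} \<longleftrightarrow> x \<in> kQ V A s t \<and> (\<forall>q. x q \<noteq> 0 \<longrightarrow> fst q = v)"
proof -
  have "(\<exists>g\<in>{(v, [])}. \<exists>r. q = (fst g, snd g @ r)) \<longleftrightarrow> fst q = v" for q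
    by (cases q) auto
  then show ?thesis by (simp add: path_ideal_iff)
qed

lemma path_ideal_mono: "P \<subseteq> P' \<Longrightarrow> path_ideal V A s t P \<subseteq> path_ideal V A s t P'"
  unfolding path_ideal_def by blast

lemma path_ideal_subset_vertex:
  "\<forall>g\<in>P. fst g = v \<Longrightarrow> path_ideal V A s t P \<subseteq> path_ideal V A s t {(v, [])}"
  by (auto simp: path_ideal_vertex_iff path_ideal_iff)

lemma pbasis_in_path_ideal: "is_path V A s t g \<Longrightarrow> g \<in> P \<Longrightarrow> pbasis g \<in> path_ideal V A s t P"
  unfolding path_ideal_iff
proof (intro conjI allI impI)
  fix q assume "is_path V A s t g" "g \<in> P" "pbasis g q \<noteq> 0"
  then show "\<exists>g\<in>P. \<exists>r. q = (fst g, snd g @ r)"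
    by (intro bexI[of _ g] exI[of _ "[]"]) (auto simp: pbasis_def split: if_splits)
qed (rule kQ_pbasis)

lemma rsub_path_ideal:
  assumes q: "quiver V A s t"
  shows "rsub V A s t (path_ideal V A s t P :: (('v,'a) path \<Rightarrow> 'k::field) set)"
  unfolding rsub_def
proof (intro conjI ballI allI)
  show "path_ideal V A s t P \<subseteq> kQ V A s t" by (auto simp: path_ideal_def)
  show "pzero \<in> path_ideal V A s t P" using kQ_pzero by (auto simp: path_ideal_def pzero_def)
  fix x :: "('v,'a) path \<Rightarrow> 'k" assume x: "x \<in> path_ideal V A s t P"
  show "padd x y \<in> path_ideal V A s t P" if y: "y \<in> path_ideal V A s t P" for y
  proof -
    have "padd x y q \<noteq> 0 \<Longrightarrow> x q \<noteq> 0 \<or> y q \<noteq> 0" for q by (auto simp: padd_def)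
    then show ?thesis using x y kQ_padd unfolding path_ideal_iff by blast
  qed
  have "smult c x q \<noteq> 0 \<Longrightarrow> x q \<noteq> 0" for c q by (simp add: smult_def)
  then show "smult c x \<in> path_ideal V A s t P" for c
    using x kQ_smult unfolding path_ideal_iff by blast
  show "pmult t x y \<in> path_ideal V A s t P" if y: "y \<in> kQ V A s t" for y
    unfolding path_ideal_iff
  proof (intro conjI allI impI)
    show "pmult t x y \<in> kQ V A s t" using kQ_pmult[OF q _ y] x by (auto simp: path_ideal_def)
    fix r assume "pmult t x y r \<noteq> 0"
    then obtain k where "x (fst r, take k (snd r)) \<noteq> 0" by (auto elim: pmult_nonzeroE)
    then obtain g r' where g: "g \<in> P" and e: "(fst r, take k (snd r)) = (fst g, snd g @ r')"
      using x unfolding path_ideal_iff by blast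
    have "r = (fst g, snd g @ r' @ drop k (snd r))"
      using e by (metis append.assoc append_take_drop_id fst_conv prod.collapse snd_conv)
    then show "\<exists>g\<in>P. \<exists>r'. r = (fst g, snd g @ r')" using g by blast
  qed
qed

lemma gsub_path_ideal:
  assumes "quiver V A s t"
  shows "gsub V A s t (path_ideal V A s t P :: (('v,'a) path \<Rightarrow> 'k::field) set)"
  unfolding gsub_def
proof (intro conjI allI ballI)
  show "rsub V A s t (path_ideal V A s t P :: (('v,'a) path \<Rightarrow> 'k::field) set)"
    by (rule rsub_path_ideal[OF assms])
  fix d and x :: "('v,'a) path \<Rightarrow> 'k" assume "x \<in> path_ideal V A s t P"
  then show "hcomp d x \<in> path_ideal V A s t P"
    using kQ_hcomp by (auto simp: path_ideal_def hcomp_def split: if_splits)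
qed

lemma path_ideal_subset_rsub:
  fixes S :: "(('v,'a) path \<Rightarrow> 'k::field) set"
  assumes q: "quiver V A s t" and S: "rsub V A s t S"
    and P: "\<forall>g\<in>P. is_path V A s t g" "\<forall>g\<in>P. pbasis g \<in> S"
  shows "path_ideal V A s t P \<subseteq> S"
proof
  fix x :: "('v,'a) path \<Rightarrow> 'k" assume x: "x \<in> path_ideal V A s t P"
  let ?F = "{p. x p \<noteq> 0}"
  have "pbasis q \<in> S" if "q \<in> ?F" for q
  proof -
    obtain g r where g: "g \<in> P" and e: "q = (fst g, snd g @ r)"
      using x \<open>q \<in> ?F\<close> unfolding path_ideal_iff by blast
    have "is_path V A s t q" using x \<open>q \<in> ?F\<close> kQ_is_path unfolding path_ideal_iff by blast
    then have "is_path V A s t (pend t g, r)"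
      using is_path_suffix[OF q, of "fst g" "snd g" r] e by simp
    then have "pmult t (pbasis g) (pbasis (pend t g, r)) \<in> S"
      using S P(2) g kQ_pbasis unfolding rsub_def by blast
    moreover have "pmult t (pbasis g) (pbasis (pend t g, r)) = (pbasis q :: ('v,'a) path \<Rightarrow> 'k)"
      using pmult_pbasis[of t g "(pend t g, r)"] e by simp
    ultimately show ?thesis by simp
  qed
  moreover have "finite ?F" using x by (auto simp: path_ideal_def kQ_def)
  moreover have "(\<lambda>p. if p \<in> ?F then x p else 0) = x" by auto
  ultimately show "x \<in> S" using rsub_restrict_support[OF S, of ?F x] by simp
qed

lemma gen_rsub_pbasis_eq_path_ideal:
  assumes q: "quiver V A s t" and P: "\<forall>g\<in>P. is_path V A s t g"
  shows "gen_rsub V A s t (pbasis ` P) = (path_ideal V A s t P :: (('v,'a) path \<Rightarrow> 'k::field) set)"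
proof
  show "gen_rsub V A s t (pbasis ` P) \<subseteq> (path_ideal V A s t P :: (('v,'a) path \<Rightarrow> 'k) set)"
    by (rule gen_rsub_least[OF rsub_path_ideal[OF q]]) (use pbasis_in_path_ideal P in blast)
  show "(path_ideal V A s t P :: (('v,'a) path \<Rightarrow> 'k) set) \<subseteq> gen_rsub V A s t (pbasis ` P)"
    unfolding gen_rsub_def
  proof (rule Inter_greatest)
    fix S :: "(('v,'a) path \<Rightarrow> 'k) set" assume "S \<in> {S. rsub V A s t S \<and> pbasis ` P \<subseteq> S}"
    then show "path_ideal V A s t P \<subseteq> S" using path_ideal_subset_rsub[OF q _ P] by blast
  qed
qed

lemma evkQ_eq_path_ideal:
  "(evkQ V A s t v :: (('v,'a) path \<Rightarrow> 'k::field) set) = path_ideal V A s t {(v, [])}"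
proof
  show "evkQ V A s t v \<subseteq> (path_ideal V A s t {(v, [])} :: (('v,'a) path \<Rightarrow> 'k) set)"
  proof
    fix x :: "('v,'a) path \<Rightarrow> 'k" assume "x \<in> evkQ V A s t v"
    then obtain y where y: "y \<in> kQ V A s t" and x: "x = (\<lambda>r. if fst r = v then y r else 0)"
      by (auto simp: evkQ_def pmult_vertex_left)
    have "x \<in> kQ V A s t" by (rule kQ_support_mono[OF y]) (simp add: x split: if_splits)
    then show "x \<in> path_ideal V A s t {(v, [])}"
      unfolding path_ideal_vertex_iff using x by simp
  qed
  show "path_ideal V A s t {(v, [])} \<subseteq> (evkQ V A s t v :: (('v,'a) path \<Rightarrow> 'k) set)"
  proof
    fix x :: "('v,'a) path \<Rightarrow> 'k" assume "x \<in> path_ideal V A s t {(v, [])}"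
    then have "x \<in> kQ V A s t" and "\<forall>q. x q \<noteq> 0 \<longrightarrow> fst q = v"
      unfolding path_ideal_vertex_iff by auto
    moreover from this(2) have "x = pmult t (pbasis (v, [])) x"
      unfolding pmult_vertex_left by metis
    ultimately show "x \<in> evkQ V A s t v" unfolding evkQ_def by blast
  qed
qed

section \<open>Uniqueness of the simple cycle\<close>

lemma simple_cycleD:
  assumes "simple_cycle V A s t v p"
  shows "v \<in> V" "walk s t v p" "pend t (v, p) = v" "p \<noteq> []" "set p \<subseteq> A"
  using assms by (auto simp: simple_cycle_def is_path_iff_walk)

lemma simple_cycle_exists:
  assumes "cyclic_vertex V A s t v"
  obtains p where "simple_cycle V A s t v p"
proof -
  let ?Q = "\<lambda>n. \<exists>p. is_path V A s t (v, p) \<and> p \<noteq> [] \<and> pend t (v, p) = v \<and> length p = n"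
  have "\<exists>n. ?Q n" using assms unfolding cyclic_vertex_def by blast
  then obtain n where "?Q n" and min: "\<forall>m<n. \<not> ?Q m" using exists_least_iff[of ?Q] by blast
  then obtain p where p: "is_path V A s t (v, p)" and ne: "p \<noteq> []" and c: "pend t (v, p) = v"
    and len: "length p = n" by blast
  have "distinct (map s p)"
  proof (rule ccontr)
    assume "\<not> distinct (map s p)"
    then obtain i j where ij: "i < j" "j < length p" "s (p ! i) = s (p ! j)"
      unfolding distinct_conv_nth by (auto simp: nat_neq_iff)
    \<comment> \<open>cutting out the closed subwalk between the two visits to the same vertex
        leaves a shorter closed walk at v\<close>
    let ?p = "take i p @ drop j p"
    have w: "walk s t v p" "v \<in> V" "set p \<subseteq> A" using p by (auto simp: is_path_iff_walk)
    have wi: "walk s t v (take i p)" using w(1) walk_append[of s t v "take i p" "drop i p"] by simp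
    have wj: "walk s t (pend t (v, take j p)) (drop j p)"
      using w(1) walk_append[of s t v "take j p" "drop j p"] by simp
    have ei: "pend t (v, take i p) = pend t (v, take j p)"
      using pend_take[OF w(1)] ij by simp
    have "walk s t v ?p" using wi wj ei by (simp add: walk_append)
    moreover have "set ?p \<subseteq> A" using w(3) set_take_subset set_drop_subset by fastforce
    ultimately have "is_path V A s t (v, ?p)" using w(2) by (simp add: is_path_iff_walk)
    moreover have "pend t (v, ?p) = v"
      using c pend_append[of t v "take j p" "drop j p"] by (simp add: pend_append ei)
    moreover have "?p \<noteq> []" "length ?p < n" using ij len by auto
    ultimately show False using min by blast
  qed
  then show ?thesis using p ne c that unfolding simple_cycle_def by blast
qed

lemma simple_cycle_prefix_eq:
  assumes c1: "simple_cycle V A s t v c1" and c2: "simple_cycle V A s t v c2" and e: "c1 = c2 @ r"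
  shows "r = []"
proof (rule ccontr)
  assume r: "r \<noteq> []"
  have w1: "walk s t v c1" and d: "distinct (map s c1)" and n1: "c1 \<noteq> []"
    using c1 by (auto simp: simple_cycle_def is_path_iff_walk)
  have "pend t (v, c2) = v" using c2 by (auto simp: simple_cycle_def)
  then have "walk s t v r" using w1 e by (simp add: walk_append)
  then have "s (c1 ! length c2) = v" using e r by (cases r) (auto simp: nth_append)
  moreover have "s (c1 ! 0) = v" using w1 n1 by (cases c1) auto
  moreover have "0 < length c2" "length c2 < length c1"
    using c2 e r by (auto simp: simple_cycle_def)
  ultimately have "map s c1 ! length c2 = map s c1 ! 0" using n1 by simp
  moreover have "length c2 < length (map s c1)" "0 < length (map s c1)"
    using \<open>length c2 < length c1\<close> by auto
  ultimately have "length c2 = 0" using nth_eq_iff_index_eq[OF d] by blast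
  then show False using \<open>0 < length c2\<close> by simp
qed

lemma gk_dim_infinite_if_exponential_growth:
  assumes L: "L > 0" and growth: "\<And>n. 2 ^ (n div L) \<le> card {p. is_path V A s t p \<and> plen p \<le> n}"
  shows "gk_dim V A s t = \<infinity>"
proof -
  define R where "R n = ln (real (card {p. is_path V A s t p \<and> plen p \<le> n})) / ln (real n)" for n
  have lower: "eventually (\<lambda>n. (real n / real L - 1) * ln 2 / ln (real n) \<le> R n) sequentially"
  proof (rule eventually_sequentiallyI[of 2])
    fix n :: nat assume n: "n \<ge> 2"
    have "real n / real L - 1 \<le> real (n div L)"
    proof -
      have "real n = real L * real (n div L) + real (n mod L)"
        by (metis of_nat_add of_nat_mult div_mult_mod_eq mult.commute)
      moreover have "real (n mod L) < real L" using L by simp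
      ultimately show ?thesis using L by (simp add: field_simps)
    qed
    then have "(real n / real L - 1) * ln 2 \<le> ln ((2::real) ^ (n div L))"
      by (simp add: ln_realpow mult_right_mono)
    also have "\<dots> \<le> ln (real (card {p. is_path V A s t p \<and> plen p \<le> n}))"
      using growth[of n] by (intro ln_mono) (auto simp flip: of_nat_le_iff)
    finally show "(real n / real L - 1) * ln 2 / ln (real n) \<le> R n"
      unfolding R_def using n by (simp add: divide_right_mono)
  qed
  have "filterlim (\<lambda>n::nat. (real n / real L - 1) * ln 2 / ln (real n)) at_top sequentially"
    using L by real_asymp
  then have "filterlim R at_top sequentially"
    using lower by (rule filterlim_at_top_mono)
  then have "((\<lambda>n. ereal (R n)) \<longlongrightarrow> \<infinity>) sequentially"
    by (simp add: tendsto_PInfty_eq_at_top)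
  then have "limsup (\<lambda>n. ereal (R n)) = \<infinity>"
    by (rule lim_imp_Limsup[OF trivial_limit_sequentially])
  then show ?thesis unfolding gk_dim_def R_def by simp
qed

lemma card_paths_exponential_growth:
  assumes fV: "finite V" and fA: "finite A"
    and c: "\<And>b. is_path V A s t (v, c b) \<and> pend t (v, c b) = v"
    and np: "\<not> (\<exists>r. c True = c False @ r)" "\<not> (\<exists>r. c False = c True @ r)"
  defines "L \<equiv> max (length (c True)) (length (c False))"
  shows "2 ^ (n div L) \<le> card {p. is_path V A s t p \<and> plen p \<le> n}"
proof -
  let ?P = "{p. is_path V A s t p \<and> plen p \<le> n}"
  let ?k = "n div L"
  let ?g = "\<lambda>w. (v, concat (map c w))"
  have closed: "is_path V A s t (?g w) \<and> pend t (?g w) = v \<and> length (concat (map c w)) \<le> length w * L" for w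
  proof (induction w)
    case Nil then show ?case using c[of True] by (simp add: is_path_iff_walk)
  next
    case (Cons b w)
    have "length (c b) \<le> L" unfolding L_def by (cases b) auto
    then show ?case using Cons c[of b] by (auto simp: is_path_iff_walk walk_append pend_append)
  qed
  have "?g ` {w. length w = ?k} \<subseteq> ?P"
  proof clarify
    fix w :: "bool list" assume "length w = ?k"
    then have "length (concat (map c w)) \<le> ?k * L" using closed[of w] by simp
    also have "\<dots> \<le> n" by simp
    finally have "length (concat (map c w)) \<le> n" .
    then show "is_path V A s t (?g w) \<and> plen (?g w) \<le> n"
      using closed[of w] by (simp add: plen_def)
  qed
  moreover have "finite ?P"
  proof (rule finite_subset)
    show "?P \<subseteq> V \<times> {xs. set xs \<subseteq> A \<and> length xs \<le> n}"
      by (auto simp: is_path_def plen_def)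
  qed (use fV finite_lists_length_le[OF fA] in blast)
  moreover have "inj_on ?g {w. length w = ?k}"
    by (auto simp: inj_on_def intro: concat_map_inj_prefix_free[OF np])
  then have "card (?g ` {w. length w = ?k}) = 2 ^ ?k"
    using card_lists_length_eq[of "UNIV :: bool set" ?k] by (simp add: card_image)
  ultimately show ?thesis using card_mono[of ?P "?g ` {w. length w = ?k}"] by simp
qed

lemma simple_cycle_unique:
  assumes fV: "finite V" and fA: "finite A" and gk: "gk_dim V A s t < \<infinity>"
    and c1: "simple_cycle V A s t v c1" and c2: "simple_cycle V A s t v c2"
  shows "c1 = c2"
proof (rule ccontr)
  assume ne: "c1 \<noteq> c2"
  define c where "c b = (if b then c1 else c2)" for b
  have np: "\<not> (\<exists>r. c True = c False @ r)" "\<not> (\<exists>r. c False = c True @ r)"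
  proof -
    have "r = []" if "c1 = c2 @ r \<or> c2 = c1 @ r" for r
      using that simple_cycle_prefix_eq[OF c1 c2] simple_cycle_prefix_eq[OF c2 c1] by blast
    then show "\<not> (\<exists>r. c True = c False @ r)" "\<not> (\<exists>r. c False = c True @ r)"
      using ne unfolding c_def by auto
  qed
  have closed: "is_path V A s t (v, c b) \<and> pend t (v, c b) = v" for b
    using c1 c2 unfolding c_def simple_cycle_def by simp
  have "max (length (c True)) (length (c False)) > 0"
    using c1 unfolding c_def simple_cycle_def by (simp add: less_max_iff_disj)
  moreover have "2 ^ (n div max (length (c True)) (length (c False))) \<le>
      card {p. is_path V A s t p \<and> plen p \<le> n}" for n
    using card_paths_exponential_growth[OF fV fA closed np] by simp
  ultimately have "gk_dim V A s t = \<infinity>"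
    by (rule gk_dim_infinite_if_exponential_growth)
  then show False using gk by simp
qed

lemma simple_cycle_the_cycle:
  assumes "finite V" "finite A" "gk_dim V A s t < \<infinity>" "cyclic_vertex V A s t v"
  shows "simple_cycle V A s t v (the_cycle V A s t v)"
proof -
  obtain p where "simple_cycle V A s t v p" using simple_cycle_exists[OF assms(4)] .
  then have "\<exists>!p. simple_cycle V A s t v p"
    using simple_cycle_unique[OF assms(1-3)] by blast
  then show ?thesis unfolding the_cycle_def by (rule theI')
qed

section \<open>The modules O_v\<close>

definition exit_paths :: "'a set \<Rightarrow> ('a \<Rightarrow> 'v) \<Rightarrow> 'v \<Rightarrow> 'a list \<Rightarrow> ('v,'a) path set" where
  "exit_paths A s v p = {(v, list_pow p m @ take i p @ [b]) | m i b.
     i < length p \<and> b \<in> A \<and> s b = s (p ! i) \<and> b \<noteq> p ! i}"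

lemma O_gens_eq: "O_gens V A s t v = pbasis ` exit_paths A s v (the_cycle V A s t v)"
  unfolding O_gens_def exit_paths_def Let_def list_pow_def by auto

lemma exit_paths_are_paths:
  assumes v: "v \<in> V" and w: "walk s t v p" and c: "pend t (v, p) = v" and A: "set p \<subseteq> A"
  shows "\<forall>g\<in>exit_paths A s v p. is_path V A s t g"
proof
  fix g assume "g \<in> exit_paths A s v p"
  then obtain m i b where g: "g = (v, list_pow p m @ take i p @ [b])" and i: "i < length p"
    and b: "b \<in> A" "s b = s (p ! i)" by (auto simp: exit_paths_def)
  have "walk s t v (take i p)" using w walk_append[of s t v "take i p" "drop i p"] by simp
  then have "walk s t v (list_pow p m @ take i p @ [b])"
    using walk_list_pow[OF w c] pend_take[OF w i] b by (simp add: walk_append pend_append)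
  moreover have "set (list_pow p m @ take i p @ [b]) \<subseteq> A"
    using set_list_pow[of p m] A b set_take_subset[of i p] by auto
  ultimately show "is_path V A s t g" using g v by (simp add: is_path_iff_walk)
qed

lemma path_exits_cycle_or_periodic:
  assumes w: "walk s t v p" and c: "pend t (v, p) = v" and "p \<noteq> []"
    and wl: "walk s t v l" and Al: "set l \<subseteq> A"
  shows "(\<exists>g\<in>exit_paths A s v p. \<exists>r. (v, l) = (fst g, snd g @ r)) \<or>
         (\<forall>j<length l. l ! j = p ! (j mod length p))"
proof (cases "\<forall>j<length l. l ! j = p ! (j mod length p)")
  case False
  let ?B = "\<lambda>j. j < length l \<and> l ! j \<noteq> p ! (j mod length p)"
  obtain j where Bj: "?B j" and min: "\<forall>j'<j. \<not> ?B j'"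
    using False exists_least_iff[of ?B] by blast
  define m where "m = j div length p"
  define i where "i = j mod length p"
  define b where "b = l ! j"
  have i: "i < length p" using \<open>p \<noteq> []\<close> by (simp add: i_def)
  have j: "j = m * length p + i" by (simp add: m_def i_def)
  have "take j l = list_pow p m @ take i p"
  proof (rule nth_equalityI)
    show "length (take j l) = length (list_pow p m @ take i p)" using Bj j i by simp
    fix k assume "k < length (take j l)"
    then have k: "k < j" "k < length l" by auto
    then have "take j l ! k = p ! (k mod length p)" using min by auto
    also have "\<dots> = (list_pow p m @ take i p @ []) ! k"
      using nth_list_pow_append_take[of i p k m "[]"] i j k by simp
    finally show "take j l ! k = (list_pow p m @ take i p) ! k" by simp
  qed
  then have tk: "take (Suc j) l = list_pow p m @ take i p @ [b]"
    using Bj by (simp add: take_Suc_conv_app_nth b_def)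
  have "s b = pend t (v, take j l)" using pend_take[OF wl] Bj by (simp add: b_def)
  also have "\<dots> = pend t (v, take i p)"
    using walk_list_pow[OF w c] by (simp add: \<open>take j l = _\<close> pend_append)
  also have "\<dots> = s (p ! i)" using pend_take[OF w i] .
  finally have "s b = s (p ! i)" .
  moreover have "b \<in> A" "b \<noteq> p ! i" using Al Bj by (auto simp: b_def i_def)
  ultimately have "(v, list_pow p m @ take i p @ [b]) \<in> exit_paths A s v p"
    using i unfolding exit_paths_def by blast
  moreover have "(v, l) = (v, (list_pow p m @ take i p @ [b]) @ drop (Suc j) l)"
    using tk by (metis append_take_drop_id)
  ultimately show ?thesis by force
qed simp

lemma path_exits_cycle_or_winds:
  assumes "walk s t v p" "pend t (v, p) = v" "p \<noteq> []" "walk s t v l" "set l \<subseteq> A"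
    and "k * length p \<le> length l"
  shows "(\<exists>g\<in>exit_paths A s v p. \<exists>r. (v, l) = (fst g, snd g @ r)) \<or>
         take (k * length p) l = list_pow p k"
  using path_exits_cycle_or_periodic[OF assms(1-5)] assms(6)
  by (auto intro!: nth_equalityI simp: nth_list_pow)

lemma pbasis_list_pow_notin_exit_ideal:
  assumes "p \<noteq> []"
  shows "pbasis (v, list_pow p k) \<notin> path_ideal V A s t (exit_paths A s v p)"
proof
  assume "pbasis (v, list_pow p k) \<in> path_ideal V A s t (exit_paths A s v p)"
  then have "\<exists>g\<in>exit_paths A s v p. \<exists>r. (v, list_pow p k) = (fst g, snd g @ r)"
    unfolding path_ideal_iff by (auto simp: pbasis_def)
  then obtain m i b r where i: "i < length p" and "b \<noteq> p ! i"
    and e: "list_pow p k = (list_pow p m @ take i p @ [b]) @ r"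
    by (auto simp: exit_paths_def)
  moreover have "m * length p + i < k * length p"
    using arg_cong[OF e, of length] i by simp
  then have "list_pow p k ! (m * length p + i) = p ! i"
    using i by (simp add: nth_list_pow)
  ultimately show False using e i by (simp add: nth_append)
qed

lemma O_mod_eq_path_ideals:
  assumes q: "quiver V A s t" and c: "simple_cycle V A s t v (the_cycle V A s t v)"
  shows "(O_mod V A s t v :: (('v,'a) path \<Rightarrow> 'k::field) set \<times> _) =
         (path_ideal V A s t {(v, [])}, path_ideal V A s t (exit_paths A s v (the_cycle V A s t v)))"
  unfolding O_mod_def O_gens_eq evkQ_eq_path_ideal
  using gen_rsub_pbasis_eq_path_ideal[OF q exit_paths_are_paths[OF simple_cycleD(1,2,3,5)[OF c]]]
  by simp

section \<open>Morphisms in QGr\<close>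

lemma torsion_quot_refl: "rsub V A s t S \<Longrightarrow> torsion_quot V A s t S S"
  unfolding torsion_quot_def rsub_def by blast

lemma gr_hom_id:
  assumes "rsub V A s t N"
  shows "gr_hom V A s t (M, N) (M, N) id"
proof -
  have "pdiff x x \<in> N" for x
    using assms by (simp add: rsub_def pdiff_def pzero_def)
  then show ?thesis unfolding gr_hom_def by auto
qed

lemma rsub_gr_hom_preimage:
  assumes f: "gr_hom V A s t (M, M0) (N, N0) f"
    and M: "rsub V A s t M" and N0: "rsub V A s t N0" and "pzero \<in> M0"
  shows "rsub V A s t {x \<in> M. f x \<in> N0}"
proof -
  have f0: "\<forall>x\<in>M0. f x \<in> N0"
    and fadd: "\<forall>x\<in>M. \<forall>y\<in>M. pdiff (f (padd x y)) (padd (f x) (f y)) \<in> N0"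
    and fsmult: "\<forall>c. \<forall>x\<in>M. pdiff (f (smult c x)) (smult c (f x)) \<in> N0"
    and fpmult: "\<forall>x\<in>M. \<forall>y\<in>kQ V A s t. pdiff (f (pmult t x y)) (pmult t (f x) y) \<in> N0"
    using f unfolding gr_hom_def fst_conv snd_conv by blast+
  have "f pzero \<in> N0" using f0 \<open>pzero \<in> M0\<close> by blast
  moreover have "f (padd x y) \<in> N0" if "x \<in> M" "y \<in> M" "f x \<in> N0" "f y \<in> N0" for x y
    using rsub_pdiff_closed[OF N0] fadd that N0 unfolding rsub_def by blast
  moreover have "f (smult c x) \<in> N0" if "x \<in> M" "f x \<in> N0" for c x
    using rsub_pdiff_closed[OF N0] fsmult that N0 unfolding rsub_def by blast
  moreover have "f (pmult t x y) \<in> N0" if "x \<in> M" "f x \<in> N0" "y \<in> kQ V A s t" for x y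
    using rsub_pdiff_closed[OF N0] fpmult that N0 unfolding rsub_def by blast
  ultimately show ?thesis using M unfolding rsub_def by blast
qed

lemma torsion_quot_contains_long_paths:
  fixes M :: "(('v,'a) path \<Rightarrow> 'k::field) set"
  assumes "torsion_quot V A s t (path_ideal V A s t {(v, [])}) M" "v \<in> V"
  obtains n where "\<And>l. is_path V A s t (v, l) \<Longrightarrow> n \<le> length l \<Longrightarrow> pbasis (v, l) \<in> M"
proof -
  have "pbasis (v, []) \<in> (path_ideal V A s t {(v, [])} :: (('v,'a) path \<Rightarrow> 'k) set)"
    using assms(2) by (intro pbasis_in_path_ideal) (auto simp: is_path_def)
  then obtain n where n: "\<forall>y\<in>kQ V A s t. (\<forall>r. y r \<noteq> 0 \<longrightarrow> n \<le> plen r) \<longrightarrow>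
      pmult t (pbasis (v, [])) y \<in> M"
    using assms(1) unfolding torsion_quot_def by blast
  have "pbasis (v, l) \<in> M" if "is_path V A s t (v, l)" "n \<le> length l" for l
  proof -
    have "\<forall>r. pbasis (v, l) r \<noteq> (0::'k) \<longrightarrow> n \<le> plen r"
      using that(2) by (simp add: pbasis_def plen_def)
    then have "pmult t (pbasis (v, [])) (pbasis (v, l)) \<in> M"
      using n kQ_pbasis[OF that(1)] by blast
    moreover have "pmult t (pbasis (v, [])) (pbasis (v, l)) = (pbasis (v, l) :: ('v,'a) path \<Rightarrow> 'k)"
      by (simp add: pmult_pbasis)
    ultimately show ?thesis by simp
  qed
  then show ?thesis using that by blast
qed

lemma pmult_vertex_in_exit_ideal:
  assumes w: "walk s t w p" "pend t (w, p) = w" "p \<noteq> []" and "v \<noteq> w"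
    and z: "z \<in> path_ideal V A s t {(w, [])}" "homog (k * length p) z"
  shows "pmult t z (pbasis (v, [])) \<in> path_ideal V A s t (exit_paths A s w p)"
  unfolding path_ideal_iff
proof (intro conjI allI impI)
  have zk: "z \<in> kQ V A s t" using z(1) by (simp add: path_ideal_vertex_iff)
  then show "pmult t z (pbasis (v, [])) \<in> kQ V A s t"
    by (rule kQ_support_mono) (simp add: pmult_vertex_right split: if_splits)
  fix r assume "pmult t z (pbasis (v, [])) r \<noteq> 0"
  then have end_v: "pend t r = v" and zr: "z r \<noteq> 0" by (auto simp: pmult_vertex_right split: if_splits)
  have "fst r = w" using zr z(1) unfolding path_ideal_vertex_iff by blast
  then obtain l where r: "r = (w, l)" by (cases r) simp
  have len: "length l = k * length p" using zr z(2) r unfolding homog_def plen_def by auto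
  have "is_path V A s t (w, l)" using kQ_is_path[OF zk zr] r by simp
  then have "walk s t w l" "set l \<subseteq> A" by (simp_all add: is_path_iff_walk)
  then consider "\<exists>g\<in>exit_paths A s w p. \<exists>r'. (w, l) = (fst g, snd g @ r')" | "l = list_pow p k"
    using path_exits_cycle_or_winds[OF w, of l A k] len by auto
  then show "\<exists>g\<in>exit_paths A s w p. \<exists>r'. r = (fst g, snd g @ r')"
  proof cases
    case 1
    then show ?thesis unfolding r .
  next
    case 2
    then have "pend t r = w" using r walk_list_pow(2)[OF w(1,2)] by simp
    then show ?thesis using end_v \<open>v \<noteq> w\<close> by simp
  qed
qed

lemma torsion_quot_exit_ideal_insert_cycle_pow:
  assumes q: "quiver V A s t" and p: "walk s t v p" "pend t (v, p) = v" "p \<noteq> []"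
  shows "torsion_quot V A s t (path_ideal V A s t {(v, [])})
           (path_ideal V A s t (insert (v, list_pow p K) (exit_paths A s v p)) ::
              (('v,'a) path \<Rightarrow> 'k::field) set)"
  unfolding torsion_quot_def
proof (intro ballI exI[of _ "K * length p"] impI)
  fix x y :: "('v,'a) path \<Rightarrow> 'k"
  assume x: "x \<in> path_ideal V A s t {(v, [])}" and y: "y \<in> kQ V A s t"
    and long: "\<forall>r. y r \<noteq> 0 \<longrightarrow> K * length p \<le> plen r"
  have xk: "x \<in> kQ V A s t" using x by (simp add: path_ideal_vertex_iff)
  show "pmult t x y \<in> path_ideal V A s t (insert (v, list_pow p K) (exit_paths A s v p))"
    unfolding path_ideal_iff
  proof (intro conjI allI impI)
    show "pmult t x y \<in> kQ V A s t" by (rule kQ_pmult[OF q xk y])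
    fix r assume nz: "pmult t x y r \<noteq> 0"
    then obtain k where xr: "x (fst r, take k (snd r)) \<noteq> 0"
      and yr: "y (pend t (fst r, take k (snd r)), drop k (snd r)) \<noteq> 0"
      by (auto elim: pmult_nonzeroE)
    have "fst (fst r, take k (snd r)) = v" using x xr unfolding path_ideal_vertex_iff by blast
    then obtain l where r: "r = (v, l)" by (cases r) simp
    have "K * length p \<le> length (drop k l)" using long[rule_format, OF yr] r by (simp add: plen_def)
    then have len: "K * length p \<le> length l" by simp
    have "is_path V A s t (v, l)" using kQ_is_path[OF kQ_pmult[OF q xk y] nz] r by simp
    then have "walk s t v l" "set l \<subseteq> A" by (simp_all add: is_path_iff_walk)
    then consider "\<exists>g\<in>exit_paths A s v p. \<exists>r'. (v, l) = (fst g, snd g @ r')"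
      | "take (K * length p) l = list_pow p K"
      using path_exits_cycle_or_winds[OF p _ _ len] by blast
    then show "\<exists>g\<in>insert (v, list_pow p K) (exit_paths A s v p). \<exists>r'. r = (fst g, snd g @ r')"
    proof cases
      case 1
      then show ?thesis unfolding r by blast
    next
      case 2
      then have "l = list_pow p K @ drop (K * length p) l"
        using append_take_drop_id[of "K * length p" l] by simp
      then show ?thesis unfolding r
        by (intro bexI[of _ "(v, list_pow p K)"] exI[of _ "drop (K * length p) l"]) simp_all
    qed
  qed
qed

lemma pbasis_list_pow_notin_torsion_extension:
  fixes N :: "(('v,'a) path \<Rightarrow> 'k::field) set"
  assumes c: "simple_cycle V A s t v p"
    and tN: "torsion_quot V A s t N (path_ideal V A s t (exit_paths A s v p))"
  shows "pbasis (v, list_pow p n) \<notin> N"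
proof
  \<comment> \<open>some further winding p^(n+n') would lie in the exit ideal\<close>
  note cyc = simple_cycleD[OF c]
  let ?G = "path_ideal V A s t (exit_paths A s v p) :: (('v,'a) path \<Rightarrow> 'k) set"
  assume "pbasis (v, list_pow p n) \<in> N"
  then obtain n' where n': "\<forall>y\<in>kQ V A s t. (\<forall>r. y r \<noteq> 0 \<longrightarrow> n' \<le> plen r) \<longrightarrow>
      pmult t (pbasis (v, list_pow p n)) y \<in> ?G"
    using tN unfolding torsion_quot_def by blast
  have "n' \<le> n' * length p" using cyc(4) by (cases p) auto
  then have "\<forall>r. pbasis (v, list_pow p n') r \<noteq> (0::'k) \<longrightarrow> n' \<le> plen r"
    by (simp add: pbasis_def plen_def)
  then have "pmult t (pbasis (v, list_pow p n)) (pbasis (v, list_pow p n')) \<in> ?G"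
    using n' kQ_pbasis[OF is_path_list_pow[OF cyc(1,2,3,5)]] by blast
  moreover have "pmult t (pbasis (v, list_pow p n)) (pbasis (v, list_pow p n')) =
      (pbasis (v, list_pow p (n + n')) :: ('v,'a) path \<Rightarrow> 'k)"
    using pmult_pbasis[of t "(v, list_pow p n)" "(v, list_pow p n')"] walk_list_pow(2)[OF cyc(2,3)]
    by (simp add: list_pow_add)
  ultimately show False using pbasis_list_pow_notin_exit_ideal[OF cyc(4)] by metis
qed

lemma qgr_hom_nonzero_O_self:
  assumes q: "quiver V A s t" and c: "simple_cycle V A s t v p"
  shows "qgr_hom_nonzero V A s t
           (path_ideal V A s t {(v, [])} :: (('v,'a) path \<Rightarrow> 'k::field) set,
            path_ideal V A s t (exit_paths A s v p))
           (path_ideal V A s t {(v, [])}, path_ideal V A s t (exit_paths A s v p))"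
proof -
  let ?E = "path_ideal V A s t {(v, [])} :: (('v,'a) path \<Rightarrow> 'k) set"
  let ?G = "path_ideal V A s t (exit_paths A s v p) :: (('v,'a) path \<Rightarrow> 'k) set"
  note cyc = simple_cycleD[OF c]
  have rG: "rsub V A s t ?G" by (rule rsub_path_ideal[OF q])
  have GE: "?G \<subseteq> ?E" by (rule path_ideal_subset_vertex) (auto simp: exit_paths_def)
  show ?thesis
    unfolding qgr_hom_nonzero_def fst_conv snd_conv
  proof (rule exI[of _ ?E], rule exI[of _ ?G], rule exI[of _ id], intro conjI allI impI)
    show "gsub V A s t ?E" "gsub V A s t ?G" by (rule gsub_path_ideal[OF q])+
    show "torsion_quot V A s t ?E ?E" "torsion_quot V A s t ?G ?G"
      by (rule torsion_quot_refl, rule rsub_path_ideal[OF q])+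
    show "gr_hom V A s t (?E, ?G) (?E, ?G) id" by (rule gr_hom_id[OF rG])
    fix M'' N'' :: "(('v,'a) path \<Rightarrow> 'k) set"
    assume "gsub V A s t M'' \<and> ?G \<subseteq> M'' \<and> M'' \<subseteq> ?E \<and> torsion_quot V A s t ?E M'' \<and>
      gsub V A s t N'' \<and> ?G \<subseteq> N'' \<and> N'' \<subseteq> ?E \<and> torsion_quot V A s t N'' ?G"
    then have tM: "torsion_quot V A s t ?E M''" and tN: "torsion_quot V A s t N'' ?G" by blast+
    obtain n where n: "\<And>l. is_path V A s t (v, l) \<Longrightarrow> n \<le> length l \<Longrightarrow> pbasis (v, l) \<in> M''"
      using torsion_quot_contains_long_paths[OF tM cyc(1)] by blast
    have "n \<le> n * length p" using cyc(4) by (cases p) auto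
    then have "pbasis (v, list_pow p n) \<in> M''" by (intro n is_path_list_pow[OF cyc(1,2,3,5)]) simp
    moreover have "pbasis (v, list_pow p n) \<notin> N''"
      by (rule pbasis_list_pow_notin_torsion_extension[OF c tN])
    ultimately show "\<exists>x\<in>M''. id x \<notin> N''" by auto
  qed (use GE in simp_all)
qed

lemma gr_hom_cycle_power_into_exit_ideal:
  fixes f :: "(('v,'a) path \<Rightarrow> 'k::field) \<Rightarrow> ('v,'a) path \<Rightarrow> 'k"
  assumes f: "gr_hom V A s t (M, M0) (path_ideal V A s t {(w, [])}, N) f"
    and N: "rsub V A s t N" "path_ideal V A s t (exit_paths A s w pw) \<subseteq> N"
    and cv: "simple_cycle V A s t v pv" and cw: "simple_cycle V A s t w pw" and "v \<noteq> w"
    and uM: "pbasis (v, list_pow pv (k * length pw)) \<in> M"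
  shows "f (pbasis (v, list_pow pv (k * length pw))) \<in> N"
proof -
  note v = simple_cycleD[OF cv] and w = simple_cycleD[OF cw]
  define u :: "('v,'a) path \<Rightarrow> 'k" where "u = pbasis (v, list_pow pv (k * length pw))"
  define e :: "('v,'a) path \<Rightarrow> 'k" where "e = pbasis (v, [])"
  have ek: "e \<in> kQ V A s t" unfolding e_def using v(1) by (intro kQ_pbasis) (simp add: is_path_def)
  have "pmult t u e = u"
    unfolding u_def e_def
    using pmult_pbasis[of t "(v, list_pow pv (k * length pw))" "(v, [])"] walk_list_pow(2)[OF v(2,3)]
    by simp
  then have fu_e: "pdiff (f u) (pmult t (f u) e) \<in> N"
    using f uM ek unfolding u_def gr_hom_def fst_conv snd_conv by metis
  have "homog ((k * length pv) * length pw) u" by (simp add: u_def homog_def pbasis_def plen_def)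
  then obtain z where z: "z \<in> path_ideal V A s t {(w, [])}" "homog ((k * length pv) * length pw) z"
      "pdiff (f u) z \<in> N"
    using f uM unfolding u_def gr_hom_def fst_conv snd_conv by blast
  have "pmult t z e \<in> N"
    unfolding e_def using pmult_vertex_in_exit_ideal[OF w(2,3,4) \<open>v \<noteq> w\<close> z(1,2)] N(2) by blast
  moreover have "pdiff (pmult t (f u) e) (pmult t z e) \<in> N"
    using N(1) z(3) ek unfolding rsub_def pmult_pdiff_left[symmetric] by blast
  ultimately have "pmult t (f u) e \<in> N" using rsub_pdiff_closed[OF N(1)] by blast
  then show ?thesis using fu_e rsub_pdiff_closed[OF N(1)] unfolding u_def by blast
qed

lemma not_qgr_hom_nonzero_O_distinct:
  assumes q: "quiver V A s t" and cv: "simple_cycle V A s t v pv" and cw: "simple_cycle V A s t w pw"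
    and "v \<noteq> w"
  shows "\<not> qgr_hom_nonzero V A s t
           (path_ideal V A s t {(v, [])} :: (('v,'a) path \<Rightarrow> 'k::field) set,
            path_ideal V A s t (exit_paths A s v pv))
           (path_ideal V A s t {(w, [])}, path_ideal V A s t (exit_paths A s w pw))"
proof
  let ?Ev = "path_ideal V A s t {(v, [])} :: (('v,'a) path \<Rightarrow> 'k) set"
  let ?Gv = "path_ideal V A s t (exit_paths A s v pv) :: (('v,'a) path \<Rightarrow> 'k) set"
  let ?Ew = "path_ideal V A s t {(w, [])} :: (('v,'a) path \<Rightarrow> 'k) set"
  let ?Gw = "path_ideal V A s t (exit_paths A s w pw) :: (('v,'a) path \<Rightarrow> 'k) set"
  note v = simple_cycleD[OF cv] and w = simple_cycleD[OF cw]
  assume "qgr_hom_nonzero V A s t (?Ev, ?Gv) (?Ew, ?Gw)"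
  then obtain M' N' f where
    gM': "gsub V A s t M'" and GvM': "?Gv \<subseteq> M'" and tM': "torsion_quot V A s t ?Ev M'"
    and gN': "gsub V A s t N'" and GwN': "?Gw \<subseteq> N'" and N'Ew: "N' \<subseteq> ?Ew"
    and tN': "torsion_quot V A s t N' ?Gw"
    and f: "gr_hom V A s t (M', ?Gv) (?Ew, N') f"
    and nonzero: "\<forall>M'' N''.
          gsub V A s t M'' \<and> ?Gv \<subseteq> M'' \<and> M'' \<subseteq> M' \<and> torsion_quot V A s t ?Ev M'' \<and>
          gsub V A s t N'' \<and> N' \<subseteq> N'' \<and> N'' \<subseteq> ?Ew \<and> torsion_quot V A s t N'' ?Gw
          \<longrightarrow> (\<exists>x\<in>M''. f x \<notin> N'')"
    unfolding qgr_hom_nonzero_def fst_conv snd_conv by blast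
  have rM': "rsub V A s t M'" and rN': "rsub V A s t N'" using gM' gN' by (auto simp: gsub_def)
  have fGv: "\<forall>x\<in>?Gv. f x \<in> N'" using f unfolding gr_hom_def by simp
  obtain n0 where n0: "\<And>l. is_path V A s t (v, l) \<Longrightarrow> n0 \<le> length l \<Longrightarrow> pbasis (v, l) \<in> M'"
    using torsion_quot_contains_long_paths[OF tM' v(1)] by blast
  \<comment> \<open>K |pv| is a multiple of |pw| and at least n0\<close>
  define K where "K = Suc n0 * length pw"
  have "Suc n0 \<le> K" using w(4) unfolding K_def by (cases pw) auto
  moreover have "K \<le> K * length pv" using v(4) by (cases pv) auto
  ultimately have "n0 \<le> K * length pv" by linarith
  then have uM': "pbasis (v, list_pow pv K) \<in> M'" by (intro n0 is_path_list_pow[OF v(1,2,3,5)]) simp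
  then have fu: "f (pbasis (v, list_pow pv K)) \<in> N'"
    unfolding K_def by (rule gr_hom_cycle_power_into_exit_ideal[OF f rN' GwN' cv cw \<open>v \<noteq> w\<close>])
  let ?P = "insert (v, list_pow pv K) (exit_paths A s v pv)"
  let ?M'' = "path_ideal V A s t ?P :: (('v,'a) path \<Rightarrow> 'k) set"
  have "?M'' \<subseteq> {x \<in> M'. f x \<in> N'}"
  proof (rule path_ideal_subset_rsub[OF q])
    have "pzero \<in> ?Gv" using rsub_path_ideal[OF q] unfolding rsub_def by blast
    then show "rsub V A s t {x \<in> M'. f x \<in> N'}" by (rule rsub_gr_hom_preimage[OF f rM' rN'])
    show paths: "\<forall>g\<in>?P. is_path V A s t g"
      using exit_paths_are_paths[OF v(1,2,3,5)] is_path_list_pow[OF v(1,2,3,5)] by simp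
    show "\<forall>g\<in>?P. pbasis g \<in> {x \<in> M'. f x \<in> N'}"
    proof
      fix g assume g: "g \<in> ?P"
      show "pbasis g \<in> {x \<in> M'. f x \<in> N'}"
      proof (cases "g \<in> exit_paths A s v pv")
        case True
        then have "pbasis g \<in> ?Gv" using paths g by (intro pbasis_in_path_ideal) auto
        then show ?thesis using GvM' fGv by blast
      next
        case False
        then show ?thesis using g uM' fu by simp
      qed
    qed
  qed
  moreover have "gsub V A s t ?M''" "?Gv \<subseteq> ?M''" "torsion_quot V A s t ?Ev ?M''"
    using gsub_path_ideal[OF q] path_ideal_mono[OF subset_insertI]
      torsion_quot_exit_ideal_insert_cycle_pow[OF q v(2,3,4)] by blast+
  ultimately have "\<exists>x\<in>?M''. f x \<notin> N'"
    using nonzero gN' N'Ew tN' by blast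
  then show False using \<open>?M'' \<subseteq> {x \<in> M'. f x \<in> N'}\<close> by blast
qed

theorem lemma5p2:
  fixes V :: "'v set" and A :: "'a set" and s t :: "'a \<Rightarrow> 'v" and v w :: 'v
  assumes "quiver V A s t" and "finite V" and "finite A"
    and "gk_dim V A s t < \<infinity>"
    and "v \<in> V" and "w \<in> V"
    and "cyclic_vertex V A s t v" and "cyclic_vertex V A s t w"
  shows "qgr_hom_nonzero V A s t
           (O_mod V A s t v :: (('v \<times> 'a list \<Rightarrow> 'k::field) set \<times> _))
           (O_mod V A s t w) \<longleftrightarrow> v = w"
proof -
  have cv: "simple_cycle V A s t v (the_cycle V A s t v)"
    and cw: "simple_cycle V A s t w (the_cycle V A s t w)"
    using simple_cycle_the_cycle[OF assms(2-4)] assms(7,8) by blast+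
  show ?thesis
  proof (cases "v = w")
    case True
    then show ?thesis
      using qgr_hom_nonzero_O_self[OF assms(1) cv]
      unfolding O_mod_eq_path_ideals[OF assms(1) cv] O_mod_eq_path_ideals[OF assms(1) cw]
      by simp
  next
    case False
    then show ?thesis
      using not_qgr_hom_nonzero_O_distinct[OF assms(1) cv cw False]
      unfolding O_mod_eq_path_ideals[OF assms(1) cv] O_mod_eq_path_ideals[OF assms(1) cw]
      by simp
  qed
qed

end
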